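(* Assume that $L_h$ is hyperregular, i.e. its Legendre transform $T\Lambda^k_h\to T^*\Lambda^k_h$, $(\varphi^i,\dot\varphi^i)\mapsto(\varphi^i,\pi_j)$ with $M_i^{\ j}\pi_j=\partial L_h/\partial\dot\varphi^i$, is a diffeomorphism. Then the dynamics of the Hamiltonian system $(\omega_h,H_h)$, namely $$M^j_{\ k}\dot\varphi^k=\frac{\partial H_h}{\partial\pi_j},\qquad M_j^{\ k}\dot\pi_k=-\frac{\partial H_h}{\partial\varphi^j},$$ are equivalent to the semi-discrete Euler--Lagrange equations $$\frac{d}{dt}(\partial_3\mathcal{L},v)_{L^2\Lambda^k(\Sigma)}-(\partial_2\mathcal{L},v)_{L^2\Lambda^k(\Sigma)}-(\partial_4\mathcal{L},dv)_{L^2\Lambda^{k+1}(\Sigma)}=0\quad\text{for all }v\in\Lambda^k_h,$$ with $\mathcal{L}$ evaluated at $(x^\mu,\varphi,\dot\varphi,d\varphi)$, $\varphi=\varphi^iv_i$.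
   Context: $\Sigma$ is a reference Cauchy surface of a spacetime $X\cong\mathbb{R}\times\Sigma$, $I$ an interval, $d$ the exterior derivative on $\Sigma$. $\Lambda^k_h\subset H\Lambda^k(\Sigma)$ is a finite element space with basis $\{v_i\}$, part of a subcomplex with cochain projections. The instantaneous Lagrangian density $\mathcal{L}(x^\mu,\varphi,\dot\varphi,d\varphi)$ is an $n$-form on $\Sigma$, with $\partial_2,\partial_3,\partial_4$ the $L^2$ Riesz representatives of its variations in $\varphi,\dot\varphi,d\varphi$. The semi-discrete Lagrangian is $L_h(t,\varphi^i,\dot\varphi^i)=\int_\Sigma\mathcal{L}(x^\mu,\varphi^iv_i,\dot\varphi^iv_i,\varphi^idv_i)$. $M$ is the mass matrix $M_i^{\ j}=(v_i,v_j)_{L^2}$, with $M_j^{\ k}$ denoting row $j$, column $k$ of $M$ and $M^j_{\ k}$ that of $M^T$. On $T^*\Lambda^k_h$ with coordinates $\varphi=\varphi^iv_i$, $\pi=\pi_iv^i$ ($v^i=(\cdot,v_i)_{L^2}$), $\omega_h=d\varphi^i\wedge M_i^{\ j}d\pi_j$. The semi-discrete Hamiltonian is $H_h(t,\varphi^i,\pi_i)=M_i^{\ j}\pi_j\dot\varphi^i-L_h(t,\varphi^i,\dot\varphi^i)$, with $\dot\varphi$ expressed via the inverse Legendre transform. *)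

theory Defs
  imports "HOL-Analysis.Analysis"
begin

definition emb :: "('n::finite \<Rightarrow> 'v::real_vector) \<Rightarrow> real^'n \<Rightarrow> 'v" where
  "emb v c = (\<Sum>i\<in>UNIV. c $ i *\<^sub>R v i)"

definition massM :: "('n::finite \<Rightarrow> 'v::real_inner) \<Rightarrow> real^'n^'n" where
  "massM v = (\<chi> i j. inner (v i) (v j))"

text \<open>Semi-discrete Lagrangian L_h(t, phi^i, phidot^i) = int L(x, phi^i v_i, phidot^i v_i, phi^i d v_i).
  Lag t a b c stands for the integrated density int_Sigma L(x^mu, a, b, c).\<close>
definition Lh :: "(real \<Rightarrow> 'v::real_vector \<Rightarrow> 'v \<Rightarrow> 'w::real_vector \<Rightarrow> real) \<Rightarrow> ('v \<Rightarrow> 'w)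
    \<Rightarrow> ('n::finite \<Rightarrow> 'v) \<Rightarrow> real \<Rightarrow> real^'n \<Rightarrow> real^'n \<Rightarrow> real" where
  "Lh Lag d v t q qd = Lag t (emb v q) (emb v qd) (emb (d \<circ> v) q)"

definition pderiv_coord :: "(real^'n::finite \<Rightarrow> real) \<Rightarrow> real^'n \<Rightarrow> 'n \<Rightarrow> real" where
  "pderiv_coord f x i = deriv (\<lambda>s. f (x + s *\<^sub>R axis i 1)) 0"

definition grad_coord :: "(real^'n::finite \<Rightarrow> real) \<Rightarrow> real^'n \<Rightarrow> real^'n" where
  "grad_coord f x = (\<chi> i. pderiv_coord f x i)"

definition legendre :: "(real \<Rightarrow> 'v::real_inner \<Rightarrow> 'v \<Rightarrow> 'w::real_vector \<Rightarrow> real) \<Rightarrow> ('v \<Rightarrow> 'w)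
    \<Rightarrow> ('n::finite \<Rightarrow> 'v) \<Rightarrow> real \<Rightarrow> (real^'n) \<times> (real^'n) \<Rightarrow> (real^'n) \<times> (real^'n)" where
  "legendre Lag d v t = (\<lambda>(q, qd). (q, matrix_inv (massM v) *v grad_coord (Lh Lag d v t q) qd))"

definition diffeo :: "('a::real_normed_vector \<Rightarrow> 'b::real_normed_vector) \<Rightarrow> bool" where
  "diffeo f \<longleftrightarrow> bij f \<and> (\<forall>x. f differentiable (at x)) \<and> (\<forall>y. inv f differentiable (at y))"

definition hyperregular :: "(real \<Rightarrow> 'v::real_inner \<Rightarrow> 'v \<Rightarrow> 'w::real_vector \<Rightarrow> real) \<Rightarrow> ('v \<Rightarrow> 'w)
    \<Rightarrow> ('n::finite \<Rightarrow> 'v) \<Rightarrow> bool" where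
  "hyperregular Lag d v \<longleftrightarrow> (\<forall>t. diffeo (legendre Lag d v t))"

definition Hh :: "(real \<Rightarrow> 'v::real_inner \<Rightarrow> 'v \<Rightarrow> 'w::real_vector \<Rightarrow> real) \<Rightarrow> ('v \<Rightarrow> 'w)
    \<Rightarrow> ('n::finite \<Rightarrow> 'v) \<Rightarrow> real \<Rightarrow> real^'n \<Rightarrow> real^'n \<Rightarrow> real" where
  "Hh Lag d v t q p =
     (let qd = snd (inv (legendre Lag d v t) (q, p)) in (massM v *v p) \<bullet> qd - Lh Lag d v t q qd)"

end

theory Submission
  imports Defs
begin

text \<open>In coordinates the Legendre transform reads \<open>M p = ((\<partial>\<^sub>3L, v\<^sub>i))\<^sub>i\<close>.
  Differentiating \<open>H\<^sub>h(\<phi>, \<pi>) = (M \<pi>) \<bullet> \<phi>' - L\<^sub>h(\<phi>, \<phi>')\<close>, with \<open>\<phi>'\<close> the inverse Legendre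
  velocity, the terms containing the derivative of \<open>\<phi>'\<close> cancel precisely because \<open>\<pi>\<close> is the
  momentum of \<open>\<phi>'\<close>. Hence \<open>\<partial>H\<^sub>h/\<partial>\<pi> = M \<phi>'\<close>, so the first Hamilton equation says that \<open>p\<close>
  is the Legendre image of \<open>(q, q')\<close>, and \<open>-\<partial>H\<^sub>h/\<partial>\<phi>\<close> is the generalised force
  \<open>((\<partial>\<^sub>2L, v\<^sub>j) + (\<partial>\<^sub>4L, d v\<^sub>j))\<^sub>j\<close>. The second equation then reads
  \<open>d/dt (\<partial>\<^sub>3L, v\<^sub>j) = (\<partial>\<^sub>2L, v\<^sub>j) + (\<partial>\<^sub>4L, d v\<^sub>j)\<close> for every basis function, which by
  linearity is the weak Euler-Lagrange equation on all of \<open>\<Lambda>\<^sup>k\<^sub>h\<close>.\<close>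

definition dual_coords :: "('n::finite \<Rightarrow> 'v::real_inner) \<Rightarrow> 'v \<Rightarrow> real^'n" where
  "dual_coords v u = (\<chi> i. u \<bullet> v i)"

lemma linear_emb: "linear (emb v)"
  unfolding emb_def by (intro linearI) (auto simp: scaleR_add_left sum.distrib scaleR_sum_right)

lemma emb_axis: "emb v (axis i 1) = v i"
proof -
  have "emb v (axis i 1) = (\<Sum>j\<in>UNIV. if j = i then v j else 0)"
    unfolding emb_def axis_def by (intro sum.cong) auto
  then show ?thesis by simp
qed

lemma emb_comp_linear: "linear d \<Longrightarrow> emb (d \<circ> v) c = d (emb v c)"
  unfolding emb_def by (simp add: linear_sum linear_scale)

lemma inner_dual_coords: "dual_coords v u \<bullet> c = u \<bullet> emb v c"
  unfolding dual_coords_def emb_def by (simp add: inner_vec_def inner_sum_right mult.commute)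

lemma massM_mult_eq_dual_coords: "massM v *v c = dual_coords v (emb v c)"
  unfolding massM_def dual_coords_def emb_def
  by (simp add: vec_eq_iff matrix_vector_mult_def inner_sum_right inner_commute mult.commute)

lemma inner_massM: "(massM v *v x) \<bullet> y = emb v x \<bullet> emb v y"
  by (simp add: massM_mult_eq_dual_coords inner_dual_coords)

lemma transpose_massM: "transpose (massM v) = massM v"
  unfolding massM_def transpose_def by (simp add: inner_commute)

lemma span_range_eq_range_emb: "span (range (v::'n::finite \<Rightarrow> 'v::real_vector)) = range (emb v)"
proof
  show "span (range v) \<subseteq> range (emb v)"
    by (rule span_minimal) (auto simp: linear_subspace_image[OF linear_emb subspace_UNIV] emb_axis[symmetric])
  show "range (emb v) \<subseteq> span (range v)"
    unfolding emb_def by (blast intro: span_sum span_scale span_base rangeI)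
qed

lemma emb_eq_0_iff:
  assumes "independent (range v)" "inj v"
  shows "emb v c = 0 \<longleftrightarrow> c = 0"
proof
  assume "emb v c = 0"
  moreover have "emb v c = (\<Sum>x\<in>range v. c $ inv v x *\<^sub>R x)"
    unfolding emb_def using assms(2) by (simp add: sum.reindex)
  ultimately have "\<forall>x\<in>range v. c $ inv v x = 0"
    using assms(1) dependent_finite[of "range v"] by auto
  then show "c = 0"
    using assms(2) by (simp add: vec_eq_iff)
qed (simp add: emb_def)

lemma invertible_massM:
  assumes "independent (range v)" "inj v"
  shows "invertible (massM v)"
  unfolding invertible_left_inverse matrix_left_invertible_ker
  using inner_massM[of v] emb_eq_0_iff[OF assms] by (metis inner_eq_zero_iff inner_zero_left)

lemma matrix_inv_mult_eq_iff:
  assumes "invertible (A::'a::comm_semiring_1^'n::finite^'n)"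
  shows "A *v x = y \<longleftrightarrow> x = matrix_inv A *v y"
proof -
  have right: "A ** matrix_inv A = mat 1" and left: "matrix_inv A ** A = mat 1"
    using assms unfolding invertible_def matrix_inv_def by (metis (mono_tags, lifting) someI_ex)+
  show ?thesis
  proof
    assume "A *v x = y"
    then have "matrix_inv A *v y = (matrix_inv A ** A) *v x"
      by (simp add: matrix_vector_mul_assoc[symmetric])
    then show "x = matrix_inv A *v y"
      by (simp add: left)
  next
    assume "x = matrix_inv A *v y"
    then have "A *v x = (A ** matrix_inv A) *v y"
      by (simp add: matrix_vector_mul_assoc[symmetric])
    then show "A *v x = y"
      by (simp add: right)
  qed
qed

lemma has_vector_derivative_componentwiseI:
  assumes "\<And>j. ((\<lambda>s. f s $ j) has_real_derivative D $ j) (at t within S)"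
  shows "(f has_vector_derivative D) (at t within S)"
  unfolding has_vector_derivative_def
proof (rule has_derivative_componentwise_within[THEN iffD2], intro ballI)
  fix i :: "real^'a" assume "i \<in> Basis"
  then obtain j where i: "i = axis j 1" unfolding Basis_vec_def by auto
  show "((\<lambda>x. f x \<bullet> i) has_derivative (\<lambda>x. x *\<^sub>R D \<bullet> i)) (at t within S)"
    using assms[of j] unfolding has_field_derivative_def i by (simp add: inner_axis mult.commute[of _ "D $ j"])
qed

lemma grad_coordI:
  assumes "\<And>i. ((\<lambda>s. f (x + s *\<^sub>R axis i 1)) has_real_derivative D $ i) (at 0)"
  shows "grad_coord f x = D"
  using assms unfolding grad_coord_def pderiv_coord_def by (simp add: DERIV_imp_deriv vec_eq_iff)

lemma has_vector_derivative_dual_coords_iff: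
  fixes v :: "'n::finite \<Rightarrow> 'v::real_inner" and l :: "'v \<Rightarrow> real"
  assumes "linear l"
  shows "(\<forall>w\<in>span (range v). ((\<lambda>s. f s \<bullet> w) has_real_derivative l w) (at t within S))
     \<longleftrightarrow> ((\<lambda>s. dual_coords v (f s)) has_vector_derivative (\<chi> j. l (v j))) (at t within S)"
proof
  assume "\<forall>w\<in>span (range v). ((\<lambda>s. f s \<bullet> w) has_real_derivative l w) (at t within S)"
  then show "((\<lambda>s. dual_coords v (f s)) has_vector_derivative (\<chi> j. l (v j))) (at t within S)"
    by (intro has_vector_derivative_componentwiseI) (simp add: dual_coords_def span_base)
next
  assume strong: "((\<lambda>s. dual_coords v (f s)) has_vector_derivative (\<chi> j. l (v j))) (at t within S)"
  show "\<forall>w\<in>span (range v). ((\<lambda>s. f s \<bullet> w) has_real_derivative l w) (at t within S)"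
  proof
    fix w assume "w \<in> span (range v)"
    then obtain c where w: "w = emb v c"
      by (auto simp: span_range_eq_range_emb)
    have "(\<chi> j. l (v j)) \<bullet> c = l w"
      unfolding w emb_def using assms
      by (simp add: inner_vec_def linear_sum linear_scale mult.commute)
    moreover have "((\<lambda>s. dual_coords v (f s) \<bullet> c) has_vector_derivative (\<chi> j. l (v j)) \<bullet> c) (at t within S)"
      by (rule bounded_linear.has_vector_derivative[OF bounded_linear_inner_left strong])
    ultimately show "((\<lambda>s. f s \<bullet> w) has_real_derivative l w) (at t within S)"
      by (simp add: w inner_dual_coords has_real_derivative_iff_has_vector_derivative)
  qed
qed

lemma invertible_has_vector_derivative_iff:
  fixes A :: "real^'n::finite^'n"
  assumes A: "invertible A" and p: "\<And>t. t \<in> I \<Longrightarrow> A *v p t = g t"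
  shows "(\<exists>p'. \<forall>t\<in>I. (p has_vector_derivative p' t) (at t within I) \<and> A *v p' t = e t)
     \<longleftrightarrow> (\<forall>t\<in>I. (g has_vector_derivative e t) (at t within I))"
proof
  assume "\<exists>p'. \<forall>t\<in>I. (p has_vector_derivative p' t) (at t within I) \<and> A *v p' t = e t"
  then obtain p' where p': "\<And>t. t \<in> I \<Longrightarrow> (p has_vector_derivative p' t) (at t within I) \<and> A *v p' t = e t"
    by blast
  show "\<forall>t\<in>I. (g has_vector_derivative e t) (at t within I)"
  proof
    fix t assume t: "t \<in> I"
    have "((\<lambda>s. A *v p s) has_vector_derivative A *v p' t) (at t within I)"
      using p'[OF t] by (intro bounded_linear.has_vector_derivative[OF matrix_vector_mul_bounded_linear]) blast
    moreover have "A *v p' t = e t"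
      using p'[OF t] by blast
    ultimately show "(g has_vector_derivative e t) (at t within I)"
      using has_vector_derivative_transform[OF t] p by metis
  qed
next
  assume g: "\<forall>t\<in>I. (g has_vector_derivative e t) (at t within I)"
  have "(p has_vector_derivative matrix_inv A *v e t) (at t within I)" if t: "t \<in> I" for t
  proof (rule has_vector_derivative_transform[OF t])
    show "p s = matrix_inv A *v g s" if "s \<in> I" for s
      using p[OF that] by (simp add: matrix_inv_mult_eq_iff[OF A])
    show "((\<lambda>s. matrix_inv A *v g s) has_vector_derivative matrix_inv A *v e t) (at t within I)"
      using g t by (intro bounded_linear.has_vector_derivative[OF matrix_vector_mul_bounded_linear]) blast
  qed
  moreover have "A *v (matrix_inv A *v e t) = e t" for t
    using matrix_inv_mult_eq_iff[OF A] by blast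
  ultimately show "\<exists>p'. \<forall>t\<in>I. (p has_vector_derivative p' t) (at t within I) \<and> A *v p' t = e t"
    by (intro exI[of _ "\<lambda>t. matrix_inv A *v e t"]) blast
qed

locale semidiscrete_lagrangian =
  fixes Lag :: "real \<Rightarrow> 'v::real_inner \<Rightarrow> 'v \<Rightarrow> 'w::real_inner \<Rightarrow> real"
    and D2 D3 :: "real \<Rightarrow> 'v \<Rightarrow> 'v \<Rightarrow> 'w \<Rightarrow> 'v"
    and D4 :: "real \<Rightarrow> 'v \<Rightarrow> 'v \<Rightarrow> 'w \<Rightarrow> 'w"
    and d :: "'v \<Rightarrow> 'w"
    and v :: "'n::finite \<Rightarrow> 'v"
  assumes linear_d: "linear d"
    and riesz: "\<And>t a b c. ((\<lambda>(x, y, z). Lag t x y z) has_derivative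
                  (\<lambda>(x, y, z). D2 t a b c \<bullet> x + D3 t a b c \<bullet> y + D4 t a b c \<bullet> z)) (at (a, b, c))"
begin

definition momentum :: "real \<Rightarrow> real^'n \<Rightarrow> real^'n \<Rightarrow> 'v" where
  "momentum t q qd = D3 t (emb v q) (emb v qd) (d (emb v q))"

definition force :: "real \<Rightarrow> real^'n \<Rightarrow> real^'n \<Rightarrow> 'v \<Rightarrow> real" where
  "force t q qd w = D2 t (emb v q) (emb v qd) (d (emb v q)) \<bullet> w
                  + D4 t (emb v q) (emb v qd) (d (emb v q)) \<bullet> d w"

lemma linear_force: "linear (force t q qd)"
  unfolding force_def using linear_d
  by (intro linearI) (simp_all add: linear_add linear_scale inner_add_right algebra_simps)

lemma Lh_eq: "Lh Lag d v t q qd = Lag t (emb v q) (emb v qd) (d (emb v q))"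
  unfolding Lh_def emb_comp_linear[OF linear_d] ..

lemma has_real_derivative_Lh:
  assumes a: "(a has_vector_derivative a') (at s0)" and b: "(b has_vector_derivative b') (at s0)"
  shows "((\<lambda>s. Lh Lag d v t (a s) (b s)) has_real_derivative
           force t (a s0) (b s0) (emb v a') + momentum t (a s0) (b s0) \<bullet> emb v b') (at s0)"
proof -
  have emb: "bounded_linear (emb v)"
    using linear_emb linear_conv_bounded_linear by blast
  have d_emb: "bounded_linear (\<lambda>c. d (emb v c))"
    using linear_compose[OF linear_emb linear_d] by (simp add: o_def linear_conv_bounded_linear)
  have "((\<lambda>s. (emb v (a s), emb v (b s), d (emb v (a s)))) has_vector_derivative
          (emb v a', emb v b', d (emb v a'))) (at s0)"
    by (intro has_vector_derivative_Pair bounded_linear.has_vector_derivative[OF emb]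
          bounded_linear.has_vector_derivative[OF d_emb] a b)
  from has_derivative_compose[OF this[unfolded has_vector_derivative_def] riesz[of t], unfolded prod.case]
  show ?thesis
    unfolding has_field_derivative_def Lh_eq force_def momentum_def
    by (rule has_derivative_eq_rhs)
      (simp add: fun_eq_iff linear_scale[OF linear_emb] linear_scale[OF linear_d] algebra_simps)
qed

lemma grad_coord_Lh_velocity: "grad_coord (Lh Lag d v t q) qd = dual_coords v (momentum t q qd)"
proof (rule grad_coordI)
  fix i
  have "((\<lambda>s. q + s *\<^sub>R 0) has_vector_derivative 0) (at 0)"
    and "((\<lambda>s. qd + s *\<^sub>R axis i 1) has_vector_derivative axis i 1) (at 0)"
    by (auto intro!: derivative_eq_intros)
  from has_real_derivative_Lh[OF this, of t]
  show "((\<lambda>s. Lh Lag d v t q (qd + s *\<^sub>R axis i 1)) has_real_derivative dual_coords v (momentum t q qd) $ i) (at 0)"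
    using linear_force[of t q qd] by (simp add: emb_axis linear_0[OF linear_emb] linear_0 dual_coords_def)
qed

lemma legendre_eq:
  "legendre Lag d v t (q, qd) = (q, matrix_inv (massM v) *v dual_coords v (momentum t q qd))"
  unfolding legendre_def grad_coord_Lh_velocity by simp

end

locale hyperregular_lagrangian = semidiscrete_lagrangian Lag D2 D3 D4 d v
  for Lag :: "real \<Rightarrow> 'v::real_inner \<Rightarrow> 'v \<Rightarrow> 'w::real_inner \<Rightarrow> real"
    and D2 D3 :: "real \<Rightarrow> 'v \<Rightarrow> 'v \<Rightarrow> 'w \<Rightarrow> 'v"
    and D4 :: "real \<Rightarrow> 'v \<Rightarrow> 'v \<Rightarrow> 'w \<Rightarrow> 'w"
    and d :: "'v \<Rightarrow> 'w"
    and v :: "'n::finite \<Rightarrow> 'v" +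
  assumes independent_basis: "independent (range v)" and inj_basis: "inj v"
    and hyperregular: "hyperregular Lag d v"
begin

lemma invertible_mass: "invertible (massM v)"
  by (rule invertible_massM[OF independent_basis inj_basis])

lemma snd_legendre_eq_iff:
  "snd (legendre Lag d v t (q, qd)) = p \<longleftrightarrow> massM v *v p = dual_coords v (momentum t q qd)"
  unfolding legendre_eq by (auto simp: matrix_inv_mult_eq_iff[OF invertible_mass])

definition velocity :: "real \<Rightarrow> real^'n \<Rightarrow> real^'n \<Rightarrow> real^'n" where
  "velocity t q p = snd (inv (legendre Lag d v t) (q, p))"

lemma bij_legendre: "bij (legendre Lag d v t)"
  using hyperregular unfolding hyperregular_def diffeo_def by blast

lemma legendre_velocity: "legendre Lag d v t (q, velocity t q p) = (q, p)"
proof -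
  obtain q0 qd where inv: "inv (legendre Lag d v t) (q, p) = (q0, qd)"
    by fastforce
  have "legendre Lag d v t (q0, qd) = (q, p)"
    using bij_inv_eq_iff[OF bij_legendre] inv by metis
  moreover have "fst (legendre Lag d v t (q0, qd)) = q0"
    by (simp add: legendre_eq)
  ultimately show ?thesis
    unfolding velocity_def inv by simp
qed

lemma velocity_eq_iff: "velocity t q p = qd \<longleftrightarrow> snd (legendre Lag d v t (q, qd)) = p"
proof
  assume "velocity t q p = qd"
  then show "snd (legendre Lag d v t (q, qd)) = p"
    using legendre_velocity by (metis snd_conv)
next
  assume "snd (legendre Lag d v t (q, qd)) = p"
  then have "legendre Lag d v t (q, qd) = (q, p)"
    by (simp add: legendre_eq)
  then show "velocity t q p = qd"
    unfolding velocity_def using bij_legendre by (metis bij_inv_eq_iff snd_conv)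
qed

lemma mass_momentum_velocity: "massM v *v p = dual_coords v (momentum t q (velocity t q p))"
  using velocity_eq_iff snd_legendre_eq_iff by blast

lemma velocity_differentiable: "(\<lambda>s. velocity t (q + s *\<^sub>R a) (p + s *\<^sub>R b)) differentiable (at 0)"
proof -
  have line: "(\<lambda>s::real. (q + s *\<^sub>R a, p + s *\<^sub>R b)) differentiable (at 0)"
    by (rule differentiableI_vector) (auto intro!: derivative_eq_intros)
  have "inv (legendre Lag d v t) differentiable (at y)" for y
    using hyperregular unfolding hyperregular_def diffeo_def by blast
  then have "(\<lambda>s. inv (legendre Lag d v t) (q + s *\<^sub>R a, p + s *\<^sub>R b)) differentiable (at 0)"
    by (rule differentiable_compose[OF _ line])
  then show ?thesis
    unfolding velocity_def
    by (rule differentiable_compose[OF bounded_linear_imp_differentiable[OF bounded_linear_snd]])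
qed

lemma has_real_derivative_Hh:
  "((\<lambda>s. Hh Lag d v t (q + s *\<^sub>R a) (p + s *\<^sub>R b)) has_real_derivative
     (massM v *v b) \<bullet> velocity t q p - force t q (velocity t q p) (emb v a)) (at 0)"
proof -
  define V where "V s = velocity t (q + s *\<^sub>R a) (p + s *\<^sub>R b)" for s
  obtain V' where V': "(V has_vector_derivative V') (at 0)"
    using velocity_differentiable vector_derivative_works unfolding V_def by blast
  have H: "Hh Lag d v t (q + s *\<^sub>R a) (p + s *\<^sub>R b)
      = (massM v *v (p + s *\<^sub>R b)) \<bullet> V s - Lh Lag d v t (q + s *\<^sub>R a) (V s)" for s
    unfolding Hh_def V_def velocity_def Let_def ..
  have "((\<lambda>s. massM v *v (p + s *\<^sub>R b)) has_vector_derivative massM v *v b) (at 0)"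
    by (intro bounded_linear.has_vector_derivative[OF matrix_vector_mul_bounded_linear])
      (auto intro!: derivative_eq_intros)
  from bounded_bilinear.has_vector_derivative[OF bounded_bilinear_inner this V']
  have pairing: "((\<lambda>s. (massM v *v (p + s *\<^sub>R b)) \<bullet> V s) has_real_derivative
      (massM v *v p) \<bullet> V' + (massM v *v b) \<bullet> V 0) (at 0)"
    by (simp add: has_real_derivative_iff_has_vector_derivative)
  have "((\<lambda>s. q + s *\<^sub>R a) has_vector_derivative a) (at 0)"
    by (auto intro!: derivative_eq_intros)
  \<comment> \<open>\<open>p\<close> is the momentum of the velocity \<open>V 0\<close>, so the \<open>V'\<close>-terms of the two derivatives cancel\<close>
  from has_real_derivative_Lh[OF this V', of t]
  have lagrangian: "((\<lambda>s. Lh Lag d v t (q + s *\<^sub>R a) (V s)) has_real_derivative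
      force t q (V 0) (emb v a) + (massM v *v p) \<bullet> V') (at 0)"
    by (simp add: inner_dual_coords[symmetric] mass_momentum_velocity[symmetric] V_def)
  show ?thesis
    unfolding H using DERIV_diff[OF pairing lagrangian] by (simp add: V_def)
qed

lemma grad_momentum_Hh: "grad_coord (\<lambda>\<pi>. Hh Lag d v t q \<pi>) p = massM v *v velocity t q p"
proof (rule grad_coordI)
  fix i
  have "(massM v *v velocity t q p) $ i = (massM v *v axis i 1) \<bullet> velocity t q p"
    unfolding inner_massM emb_axis by (simp add: massM_mult_eq_dual_coords dual_coords_def inner_commute)
  then show "((\<lambda>s. Hh Lag d v t q (p + s *\<^sub>R axis i 1)) has_real_derivative
      (massM v *v velocity t q p) $ i) (at 0)"
    using has_real_derivative_Hh[of t q 0 p "axis i 1"]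
    by (simp only: scaleR_zero_right add_0_right linear_0[OF linear_emb] linear_0[OF linear_force] diff_zero)
qed

lemma grad_position_Hh: "grad_coord (\<lambda>\<phi>. Hh Lag d v t \<phi> p) q = - (\<chi> j. force t q (velocity t q p) (v j))"
proof (rule grad_coordI)
  fix i
  show "((\<lambda>s. Hh Lag d v t (q + s *\<^sub>R axis i 1) p) has_real_derivative
      (- (\<chi> j. force t q (velocity t q p) (v j))) $ i) (at 0)"
    using has_real_derivative_Hh[of t q "axis i 1" p 0] by (simp add: emb_axis)
qed

lemma hamilton_velocity_iff:
  "massM v *v qd = grad_coord (\<lambda>\<pi>. Hh Lag d v t q \<pi>) p \<longleftrightarrow> p = snd (legendre Lag d v t (q, qd))"
  unfolding grad_momentum_Hh
  by (metis matrix_inv_mult_eq_iff[OF invertible_mass] velocity_eq_iff)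

lemma hamilton_momentum_iff_weak_euler_lagrange:
  assumes legendre: "\<And>t. t \<in> I \<Longrightarrow> p t = snd (legendre Lag d v t (q t, q' t))"
  shows "(\<exists>p'. \<forall>t\<in>I. (p has_vector_derivative p' t) (at t within I)
            \<and> massM v *v p' t = - grad_coord (\<lambda>\<phi>. Hh Lag d v t \<phi> (p t)) (q t))
     \<longleftrightarrow> (\<forall>w\<in>span (range v). \<forall>t\<in>I. ((\<lambda>s. momentum s (q s) (q' s) \<bullet> w)
            has_real_derivative force t (q t) (q' t) w) (at t within I))"
proof -
  have velocity: "velocity t (q t) (p t) = q' t" if "t \<in> I" for t
    using legendre[OF that] velocity_eq_iff by simp
  have force: "- grad_coord (\<lambda>\<phi>. Hh Lag d v t \<phi> (p t)) (q t) = (\<chi> j. force t (q t) (q' t) (v j))"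
    if "t \<in> I" for t
    using velocity[OF that] by (simp add: grad_position_Hh)
  have "(\<exists>p'. \<forall>t\<in>I. (p has_vector_derivative p' t) (at t within I)
            \<and> massM v *v p' t = - grad_coord (\<lambda>\<phi>. Hh Lag d v t \<phi> (p t)) (q t))
     \<longleftrightarrow> (\<forall>t\<in>I. ((\<lambda>s. dual_coords v (momentum s (q s) (q' s))) has_vector_derivative
            - grad_coord (\<lambda>\<phi>. Hh Lag d v t \<phi> (p t)) (q t)) (at t within I))"
    by (intro invertible_has_vector_derivative_iff[OF invertible_mass])
      (metis mass_momentum_velocity velocity)
  also have "\<dots> \<longleftrightarrow> (\<forall>t\<in>I. ((\<lambda>s. dual_coords v (momentum s (q s) (q' s))) has_vector_derivative
            (\<chi> j. force t (q t) (q' t) (v j))) (at t within I))"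
    by (simp only: force cong: ball_cong)
  also have "\<dots> \<longleftrightarrow> (\<forall>t\<in>I. \<forall>w\<in>span (range v). ((\<lambda>s. momentum s (q s) (q' s) \<bullet> w)
            has_real_derivative force t (q t) (q' t) w) (at t within I))"
    by (simp add: has_vector_derivative_dual_coords_iff[OF linear_force])
  finally show ?thesis
    by blast
qed

end

theorem mainTheorem7:
  fixes Lag :: "real \<Rightarrow> 'v::real_inner \<Rightarrow> 'v \<Rightarrow> 'w::real_inner \<Rightarrow> real"
    and D2 D3 :: "real \<Rightarrow> 'v \<Rightarrow> 'v \<Rightarrow> 'w \<Rightarrow> 'v"
    and D4 :: "real \<Rightarrow> 'v \<Rightarrow> 'v \<Rightarrow> 'w \<Rightarrow> 'w"
    and d :: "'v \<Rightarrow> 'w"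
    and v :: "'n::finite \<Rightarrow> 'v"
    and I :: "real set"
    and q q' p :: "real \<Rightarrow> real^'n"
  assumes d_lin: "linear d"
    and basis: "independent (range v)" "inj v"
    and riesz: "\<And>t a b c. ((\<lambda>(x, y, z). Lag t x y z) has_derivative
                  (\<lambda>(x, y, z). D2 t a b c \<bullet> x + D3 t a b c \<bullet> y + D4 t a b c \<bullet> z)) (at (a, b, c))"
    and hyp: "hyperregular Lag d v"
    and I_int: "is_interval I"
    and q_deriv: "\<And>t. t \<in> I \<Longrightarrow> (q has_vector_derivative q' t) (at t within I)"
  shows "(\<exists>p'. \<forall>t\<in>I. (p has_vector_derivative p' t) (at t within I)
            \<and> transpose (massM v) *v q' t = grad_coord (\<lambda>\<pi>. Hh Lag d v t (q t) \<pi>) (p t)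
            \<and> massM v *v p' t = - grad_coord (\<lambda>\<phi>. Hh Lag d v t \<phi> (p t)) (q t))
     \<longleftrightarrow>
     ((\<forall>t\<in>I. p t = snd (legendre Lag d v t (q t, q' t)))
      \<and> (\<forall>w\<in>span (range v). \<forall>t\<in>I. \<exists>D.
           ((\<lambda>s. D3 s (emb v (q s)) (emb v (q' s)) (d (emb v (q s))) \<bullet> w) has_real_derivative D)
              (at t within I)
           \<and> D - D2 t (emb v (q t)) (emb v (q' t)) (d (emb v (q t))) \<bullet> w
               - D4 t (emb v (q t)) (emb v (q' t)) (d (emb v (q t))) \<bullet> d w = 0))"
proof -
  interpret hyperregular_lagrangian Lag D2 D3 D4 d v
    using d_lin riesz basis hyp
    by (simp add: hyperregular_lagrangian_def semidiscrete_lagrangian_def hyperregular_lagrangian_axioms_def)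
  have first_eq: "transpose (massM v) *v q' t = grad_coord (\<lambda>\<pi>. Hh Lag d v t (q t) \<pi>) (p t)
      \<longleftrightarrow> p t = snd (legendre Lag d v t (q t, q' t))" for t
    unfolding transpose_massM by (rule hamilton_velocity_iff)
  have weak_eq: "(\<exists>D. (f has_real_derivative D) F \<and> D - a - b = 0) \<longleftrightarrow> (f has_real_derivative a + b) F"
    for f F and a b :: real
    by auto
  show ?thesis
    using hamilton_momentum_iff_weak_euler_lagrange[of I p q q']
    unfolding first_eq weak_eq force_def momentum_def by blast
qed

end
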